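(* Fix integers $n\ge1$, $k_1,k_2\ge0$ and $C>0$. For $\delta\in(0,1)$ and $\kappa\ge0$ put $R=\kappa\delta/2$ and \[H_{k_1,k_2}=\int_{-\pi}^{\pi}e^{\kappa\cos s+R\,r(-\delta e^{is})}e^{-i(n+k_1-1)s}\tilde\phi_{k_1,k_2}(0,\delta e^{is})\,ds .\] Then for every $N\in\mathbb{N}$, \[H_{k_1,k_2}=2\pi\sum_{|\alpha|\le N}I_{n+k_1-1-\alpha_2}(\kappa)\frac{\partial^\alpha\tilde\phi_{k_1,k_2}(0,0)\,\kappa^{\alpha_1}}{2^{\alpha_1}\alpha!}\delta^{|\alpha|}+O(\delta^{N+1})\] as $\delta\to0^+$, uniformly as $\kappa$ runs through $[0,C]$, where $\alpha=(\alpha_1,\alpha_2)\in\mathbb{N}^2$ and $\partial^\alpha=\partial_R^{\alpha_1}\partial_\xi^{\alpha_2}$.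
   Context: $r(\lambda)=1+\frac1\lambda-\pi(1+\lambda)\cot(\pi\lambda)$ for $\lambda\notin\mathbb{Z}$ and $r(0)=0$ (holomorphic on its domain). $\tilde\phi_{k_1,k_2}(R,\xi)=e^{R\,r(-\xi)}\frac{(\pi\xi)^{n+k_1}\cos(\pi\xi)^{k_1}(1-\xi)^{n+k_1+k_2}}{\sin(\pi\xi)^{n+k_1}}$ for $\xi\notin\mathbb{Z}$ and $\tilde\phi_{k_1,k_2}(R,0)=1$. $I_\nu$ is the modified Bessel function of integer order $\nu$ (with $I_{-\nu}=I_\nu$), $I_\nu(\zeta)=\sum_{k\ge0}\frac{\zeta^{2k+\nu}}{2^{2k+\nu}k!\,\Gamma(k+\nu+1)}$, and for $s>0$, $I_\nu(s)=\frac1{2\pi}\int_{-\pi}^\pi e^{s\cos\xi-i\nu\xi}d\xi$. *)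

theory Defs
  imports "HOL-Analysis.Analysis"
begin

text \<open>r(lambda) = 1 + 1/lambda - pi (1+lambda) cot(pi lambda) for lambda not an integer, r(0) = 0.
  At nonzero integers (where the paper leaves r undefined) we use the value 0.\<close>
definition r_fun :: "complex \<Rightarrow> complex" where
  "r_fun l = (if l \<in> \<int> then 0 else 1 + 1 / l - of_real pi * (1 + l) * cot (of_real pi * l))"

text \<open>phi tilde_{k1,k2}(R, xi); value 1 at xi = 0, value 0 at nonzero integers (undefined in the paper).\<close>
definition phi_tilde :: "nat \<Rightarrow> nat \<Rightarrow> nat \<Rightarrow> complex \<Rightarrow> complex \<Rightarrow> complex" where
  "phi_tilde n k1 k2 R xi =
     (if xi = 0 then 1
      else if xi \<in> \<int> then 0
      else exp (R * r_fun (- xi)) * (of_real pi * xi) ^ (n + k1) * cos (of_real pi * xi) ^ k1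
             * (1 - xi) ^ (n + k1 + k2) / sin (of_real pi * xi) ^ (n + k1))"

definition phi_deriv :: "nat \<Rightarrow> nat \<Rightarrow> nat \<Rightarrow> nat \<Rightarrow> nat \<Rightarrow> complex" where
  "phi_deriv n k1 k2 a1 a2 =
     (deriv ^^ a1) (\<lambda>R. (deriv ^^ a2) (\<lambda>xi. phi_tilde n k1 k2 R xi) 0) 0"

text \<open>Modified Bessel function of integer order nu (using I_{-nu} = I_nu), via its power series.\<close>
definition besselI :: "int \<Rightarrow> real \<Rightarrow> real" where
  "besselI nu x = (\<Sum>k. (x / 2) ^ (2 * k + nat \<bar>nu\<bar>) / (fact k * fact (k + nat \<bar>nu\<bar>)))"

definition H_int :: "nat \<Rightarrow> nat \<Rightarrow> nat \<Rightarrow> real \<Rightarrow> real \<Rightarrow> complex" where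
  "H_int n k1 k2 kappa delta =
     (let R = kappa * delta / 2 in
      integral {-pi..pi} (\<lambda>s.
        exp (of_real (kappa * cos s) + of_real R * r_fun (- (of_real delta * exp (\<i> * of_real s))))
        * exp (- \<i> * of_nat (n + k1 - 1) * of_real s)
        * phi_tilde n k1 k2 0 (of_real delta * exp (\<i> * of_real s))))"

end

theory Submission
  imports Defs "HOL-Complex_Analysis.Complex_Analysis"
begin

text \<open>
  On the circle \<open>\<xi> = \<delta> e^(i s)\<close> the integrand of \<open>H\<close> is \<open>exp (\<kappa> cos s) e^(-i (n + k1 - 1) s)\<close> times
  \<open>exp (R r(-\<xi>)) \<phi>(0, \<xi>)\<close>, and this second factor is \<open>exp (R g) h\<close> for functions \<open>g\<close>, \<open>h\<close> holomorphic
  on the unit disc with \<open>g 0 = 0\<close> (the singularities of \<open>r(-\<xi>)\<close> and \<open>\<phi>(0, \<xi>)\<close> at \<open>\<xi> = 0\<close> are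
  removable). As \<open>|R| \<le> C |\<xi>|\<close>, its Taylor polynomial of total degree \<open>N\<close> in \<open>(R, \<xi>)\<close> approximates
  it up to \<open>O(\<delta>^(N+1))\<close> uniformly in \<open>\<kappa> \<le> C\<close>, and its coefficients are the mixed derivatives of
  \<open>\<phi>\<close> at the origin. Integrating the polynomial term by term, \<open>\<xi>^a2\<close> shifts the Fourier mode
  by \<open>a2\<close>, and \<open>\<integral> exp (\<kappa> cos s) e^(-i \<nu> s) ds = 2 \<pi> I\<^sub>\<nu>(\<kappa>)\<close>, as one sees by expanding
  \<open>exp (\<kappa> cos s)\<close> in powers of \<open>cos s\<close> and reading off the Fourier coefficients of \<open>cos^j s\<close>.
\<close>

section \<open>The Bessel integral\<close>

lemma has_integral_exp_int_freq:
  fixes p :: int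
  shows "((\<lambda>s::real. exp (\<i> * of_int p * of_real s)) has_integral
           (if p = 0 then of_real (2 * pi) else 0)) {-pi..pi}"
proof (cases "p = 0")
  case True
  then show ?thesis
    using has_integral_const_real[of "1::complex" "-pi" pi] by (simp add: scaleR_conv_of_real)
next
  case False
  define F where "F = (\<lambda>z::complex. exp (\<i> * of_int p * z) / (\<i> * of_int p))"
  have "((\<lambda>s. exp (\<i> * of_int p * of_real s)) has_integral (F (of_real pi) - F (of_real (-pi)))) {-pi..pi}"
  proof (rule fundamental_theorem_of_calculus)
    fix x :: real
    have "(F has_field_derivative exp (\<i> * of_int p * of_real x)) (at (of_real x))"
      unfolding F_def using False by (auto intro!: derivative_eq_intros)
    then show "((\<lambda>s. F (of_real s)) has_vector_derivative exp (\<i> * of_int p * of_real x))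
                 (at x within {-pi..pi})"
      by (rule has_vector_derivative_real_field)
  qed (use pi_ge_zero in auto)
  moreover have "exp (\<i> * of_int p * of_real pi) = exp (- (\<i> * of_int p * of_real pi))"
    unfolding exp_eq by (intro exI[of _ p]) (simp add: algebra_simps)
  ultimately show ?thesis
    using False by (simp add: F_def)
qed

lemma cos_power_exp_expansion:
  fixes s :: real
  shows "of_real (cos s) ^ j
           = (\<Sum>l\<le>j. of_nat (j choose l) * exp (\<i> * of_int (2 * int l - int j) * of_real s)) / 2 ^ j"
proof -
  have "of_real (cos s) = (exp (\<i> * of_real s) + exp (- (\<i> * of_real s))) / (2::complex)"
    by (simp add: cos_of_real[symmetric] cos_exp_eq)
  then have "of_real (cos s) ^ j = (exp (\<i> * of_real s) + exp (- (\<i> * of_real s))) ^ j / (2::complex) ^ j"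
    by (metis power_divide)
  also have "(exp (\<i> * of_real s) + exp (- (\<i> * of_real s))) ^ j
      = (\<Sum>l\<le>j. of_nat (j choose l) * exp (\<i> * of_real s) ^ l * exp (- (\<i> * of_real s)) ^ (j - l))"
    by (rule binomial_ring)
  also have "\<dots> = (\<Sum>l\<le>j. of_nat (j choose l) * exp (\<i> * of_int (2 * int l - int j) * of_real s))"
  proof (rule sum.cong[OF refl])
    fix l assume "l \<in> {..j}"
    then have "of_nat l * (\<i> * of_real s) + of_nat (j - l) * (- (\<i> * of_real s))
             = \<i> * of_int (2 * int l - int j) * (of_real s :: complex)"
      by (simp add: of_nat_diff algebra_simps)
    then show "of_nat (j choose l) * exp (\<i> * of_real s) ^ l * exp (- (\<i> * of_real s)) ^ (j - l)
        = of_nat (j choose l) * exp (\<i> * of_int (2 * int l - int j) * of_real s)"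
      by (simp only: mult.assoc exp_of_nat_mult[symmetric] exp_add[symmetric])
  qed
  finally show ?thesis .
qed

definition cos_power_coeff :: "int \<Rightarrow> nat \<Rightarrow> nat" where
  "cos_power_coeff \<nu> j = (\<Sum>l\<le>j. if 2 * int l - int j = \<nu> then j choose l else 0)"

lemma cos_power_fourier_integral:
  "((\<lambda>s::real. of_real (cos s) ^ j * exp (- \<i> * of_int \<nu> * of_real s))
     has_integral of_real (2 * pi * cos_power_coeff \<nu> j / 2 ^ j)) {-pi..pi}"
proof -
  have expand: "of_real (cos s) ^ j * exp (- \<i> * of_int \<nu> * of_real s)
      = (\<Sum>l\<le>j. (of_nat (j choose l) / 2 ^ j) * exp (\<i> * of_int (2 * int l - int j - \<nu>) * of_real s))"
    for s :: real
  proof -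
    have "of_real (cos s) ^ j * exp (- \<i> * of_int \<nu> * of_real s)
        = (\<Sum>l\<le>j. (of_nat (j choose l) / 2 ^ j)
             * (exp (\<i> * of_int (2 * int l - int j) * of_real s) * exp (- \<i> * of_int \<nu> * of_real s)))"
      by (simp add: cos_power_exp_expansion sum_distrib_right sum_divide_distrib mult.assoc)
    also have "\<dots> = (\<Sum>l\<le>j. (of_nat (j choose l) / 2 ^ j) * exp (\<i> * of_int (2 * int l - int j - \<nu>) * of_real s))"
      by (rule sum.cong[OF refl]) (simp add: exp_add[symmetric] algebra_simps)
    finally show ?thesis .
  qed
  have "((\<lambda>s::real. \<Sum>l\<le>j. (of_nat (j choose l) / 2 ^ j) * exp (\<i> * of_int (2 * int l - int j - \<nu>) * of_real s))
     has_integral (\<Sum>l\<le>j. (of_nat (j choose l) / 2 ^ j)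
                    * (if 2 * int l - int j - \<nu> = 0 then of_real (2 * pi) else 0))) {-pi..pi}"
    by (intro has_integral_sum finite_atMost has_integral_mult_right has_integral_exp_int_freq)
  also have "(\<Sum>l\<le>j. (of_nat (j choose l) / 2 ^ j)
                 * (if 2 * int l - int j - \<nu> = 0 then of_real (2 * pi) else 0))
           = (of_real (2 * pi * cos_power_coeff \<nu> j / 2 ^ j) :: complex)"
    unfolding cos_power_coeff_def of_nat_sum of_real_sum sum_divide_distrib sum_distrib_left
    by (rule sum.cong[OF refl]) auto
  finally show ?thesis unfolding expand .
qed

lemma cos_power_coeff_le: "cos_power_coeff \<nu> j \<le> 2 ^ j"
proof -
  have "cos_power_coeff \<nu> j \<le> (\<Sum>l\<le>j. j choose l)"
    unfolding cos_power_coeff_def by (intro sum_mono) auto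
  then show ?thesis by (simp add: choose_row_sum)
qed

lemma cos_power_coeff_eq_0:
  assumes "\<nexists>k. j = 2 * k + nat \<bar>\<nu>\<bar>"
  shows "cos_power_coeff \<nu> j = 0"
  unfolding cos_power_coeff_def
proof (rule sum.neutral, rule ballI)
  fix l assume l: "l \<in> {..j}"
  have "2 * int l - int j \<noteq> \<nu>"
  proof
    assume "2 * int l - int j = \<nu>"
    then have "j = 2 * (if \<nu> \<ge> 0 then j - l else l) + nat \<bar>\<nu>\<bar>"
      using l by auto
    then show False using assms by blast
  qed
  then show "(if 2 * int l - int j = \<nu> then j choose l else 0) = 0" by simp
qed

lemma cos_power_coeff_central:
  "real (cos_power_coeff \<nu> (2 * k + nat \<bar>\<nu>\<bar>)) = fact (2 * k + nat \<bar>\<nu>\<bar>) / (fact k * fact (k + nat \<bar>\<nu>\<bar>))"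
proof -
  define a where "a = nat \<bar>\<nu>\<bar>"
  define j where "j = 2 * k + a"
  define l0 where "l0 = (if \<nu> \<ge> 0 then k + a else k)"
  have "cos_power_coeff \<nu> j = (\<Sum>l\<le>j. if l = l0 then j choose l else 0)"
    unfolding cos_power_coeff_def by (rule sum.cong[OF refl]) (auto simp: l0_def j_def a_def)
  also have "\<dots> = j choose l0"
    by (simp add: l0_def j_def)
  finally have "real (cos_power_coeff \<nu> j) = fact j / (fact l0 * fact (j - l0))"
    by (simp add: binomial_fact l0_def j_def)
  moreover have "fact l0 * fact (j - l0) = (fact k * fact (k + a) :: real)"
    unfolding l0_def j_def by auto
  ultimately show ?thesis unfolding j_def a_def by simp
qed

lemma cos_power_coeff_series_sums_besselI:
  "(\<lambda>j. \<kappa> ^ j / fact j * (cos_power_coeff \<nu> j / 2 ^ j)) sums besselI \<nu> \<kappa>"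
proof -
  define a where "a = (\<lambda>j. \<kappa> ^ j / fact j * (cos_power_coeff \<nu> j / 2 ^ j))"
  define g where "g = (\<lambda>k::nat. 2 * k + nat \<bar>\<nu>\<bar>)"
  have "summable (\<lambda>j. \<bar>\<kappa>\<bar> ^ j / fact j)"
    using summable_exp[of "\<bar>\<kappa>\<bar>"] by (simp add: inverse_eq_divide)
  moreover have "norm (a j) \<le> \<bar>\<kappa>\<bar> ^ j / fact j" for j
  proof -
    have "real (cos_power_coeff \<nu> j) / 2 ^ j \<le> 1"
      using cos_power_coeff_le[of \<nu> j] by (simp add: divide_le_eq_1)
    then have "\<bar>\<kappa>\<bar> ^ j / fact j * (real (cos_power_coeff \<nu> j) / 2 ^ j) \<le> \<bar>\<kappa>\<bar> ^ j / fact j"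
      by (rule mult_left_le) simp
    then show ?thesis
      by (simp add: a_def abs_mult power_abs)
  qed
  ultimately have "summable a"
    by (rule summable_comparison_test'[where N=0])
  moreover have "a j = 0" if "j \<notin> range g" for j
  proof -
    have "\<nexists>k. j = 2 * k + nat \<bar>\<nu>\<bar>"
      using that unfolding g_def by auto
    then show ?thesis
      unfolding a_def by (simp add: cos_power_coeff_eq_0)
  qed
  ultimately have "(\<lambda>k. a (g k)) sums suminf a"
    using sums_mono_reindex[of g a] summable_sums[of a] unfolding g_def strict_mono_def by auto
  moreover have "a (g k) = (\<kappa> / 2) ^ (2 * k + nat \<bar>\<nu>\<bar>) / (fact k * fact (k + nat \<bar>\<nu>\<bar>))" for k
  proof -
    have "fact (g k) > (0::real)" by simp
    then show ?thesis
      unfolding a_def g_def cos_power_coeff_central power_divide by (simp add: field_simps)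
  qed
  ultimately have "(\<lambda>k. (\<kappa> / 2) ^ (2 * k + nat \<bar>\<nu>\<bar>) / (fact k * fact (k + nat \<bar>\<nu>\<bar>))) sums suminf a"
    by simp
  then show ?thesis
    unfolding besselI_def using \<open>summable a\<close> by (simp add: sums_iff a_def)
qed

lemma norm_integral_exp_cos_taylor_remainder:
  "norm (integral {-pi..pi} (\<lambda>s. (exp (of_real (\<kappa> * cos s)) - (\<Sum>j\<le>n. of_real (\<kappa> * cos s) ^ j / fact j))
                                   * exp (- \<i> * of_int \<nu> * of_real s)))
     \<le> exp \<bar>\<kappa>\<bar> * \<bar>\<kappa>\<bar> ^ Suc n / fact n * (pi - - pi)"
proof (rule integral_bound)
  fix s :: real
  define z where "z = (of_real (\<kappa> * cos s) :: complex)"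
  have "norm z \<le> \<bar>\<kappa>\<bar>"
    using abs_cos_le_one[of s] unfolding z_def norm_of_real abs_mult by (simp add: mult_left_le)
  have "norm ((exp z - (\<Sum>j\<le>n. z ^ j / fact j)) * exp (- \<i> * of_int \<nu> * of_real s))
          = norm (exp z - (\<Sum>j\<le>n. z ^ j / fact j))"
    by (simp add: norm_mult norm_exp_eq_Re)
  also have "\<dots> \<le> exp (norm z) * norm z ^ Suc n / fact n"
    by (rule Taylor_exp_field)
  also have "\<dots> \<le> exp \<bar>\<kappa>\<bar> * \<bar>\<kappa>\<bar> ^ Suc n / fact n"
    using \<open>norm z \<le> \<bar>\<kappa>\<bar>\<close> by (intro divide_right_mono mult_mono power_mono) auto
  finally show "norm ((exp (of_real (\<kappa> * cos s)) - (\<Sum>j\<le>n. of_real (\<kappa> * cos s) ^ j / fact j))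
                      * exp (- \<i> * of_int \<nu> * of_real s))
                  \<le> exp \<bar>\<kappa>\<bar> * \<bar>\<kappa>\<bar> ^ Suc n / fact n"
    unfolding z_def .
qed (use pi_ge_zero in \<open>auto intro!: continuous_intros\<close>)

lemma exp_cos_fourier_integral_sums:
  "(\<lambda>j. of_real (\<kappa> ^ j / fact j * (2 * pi * cos_power_coeff \<nu> j / 2 ^ j))) sums
     integral {-pi..pi} (\<lambda>s. exp (of_real (\<kappa> * cos s)) * exp (- \<i> * of_int \<nu> * of_real s))"
    (is "?a sums ?L")
proof -
  define E where "E = (\<lambda>s::real. exp (- \<i> * of_int \<nu> * of_real s))"
  define P where "P = (\<lambda>n s. \<Sum>j\<le>n. of_real (\<kappa> * cos s) ^ j / fact j :: complex)"
  have int_P: "((\<lambda>s. P n s * E s) has_integral (\<Sum>j\<le>n. ?a j)) {-pi..pi}" for n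
  proof -
    have "((\<lambda>s. \<Sum>j\<le>n. of_real (\<kappa> ^ j / fact j) * (of_real (cos s) ^ j * E s))
            has_integral (\<Sum>j\<le>n. ?a j)) {-pi..pi}"
      unfolding of_real_mult[of "\<kappa> ^ j / fact j" for j] E_def
      by (intro has_integral_sum finite_atMost has_integral_mult_right cos_power_fourier_integral)
    then show ?thesis
      by (simp add: P_def sum_distrib_right power_mult_distrib mult.assoc)
  qed
  have "?L - (\<Sum>j\<le>n. ?a j) = integral {-pi..pi} (\<lambda>s. exp (of_real (\<kappa> * cos s)) * E s - P n s * E s)" for n
    using integral_unique[OF int_P] has_integral_integrable[OF int_P] unfolding E_def
    by (subst integral_diff) (auto intro!: integrable_continuous_interval continuous_intros)
  then have remainder: "?L - (\<Sum>j\<le>n. ?a j) = integral {-pi..pi} (\<lambda>s. (exp (of_real (\<kappa> * cos s)) - P n s) * E s)"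
    for n by (simp add: left_diff_distrib)
  have bound: "norm (?L - (\<Sum>j\<le>n. ?a j)) \<le> (exp \<bar>\<kappa>\<bar> * \<bar>\<kappa>\<bar> * (2 * pi)) * (\<bar>\<kappa>\<bar> ^ n / fact n)" for n
  proof -
    have "norm (?L - (\<Sum>j\<le>n. ?a j)) \<le> exp \<bar>\<kappa>\<bar> * \<bar>\<kappa>\<bar> ^ Suc n / fact n * (pi - - pi)"
      unfolding remainder P_def E_def by (rule norm_integral_exp_cos_taylor_remainder)
    then show ?thesis
      by (simp add: field_simps)
  qed
  have "(\<lambda>n. \<bar>\<kappa>\<bar> ^ n / fact n) \<longlonglongrightarrow> 0"
    using summable_LIMSEQ_zero[OF summable_exp] by (auto simp add: inverse_eq_divide)
  then have "(\<lambda>n. (exp \<bar>\<kappa>\<bar> * \<bar>\<kappa>\<bar> * (2 * pi)) * (\<bar>\<kappa>\<bar> ^ n / fact n)) \<longlonglongrightarrow> 0"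
    by (rule tendsto_mult_right_zero)
  then have "(\<lambda>n. ?L - (\<Sum>j\<le>n. ?a j)) \<longlonglongrightarrow> 0"
    by (rule Lim_null_comparison[rotated]) (use bound in auto)
  then have "(\<lambda>n. \<Sum>j\<le>n. ?a j) \<longlonglongrightarrow> ?L"
    using tendsto_diff[OF tendsto_const[of ?L]] by fastforce
  then show ?thesis
    by (simp add: sums_def_le)
qed

lemma has_integral_exp_cos_besselI:
  "((\<lambda>s. exp (of_real (\<kappa> * cos s)) * exp (- \<i> * of_int \<nu> * of_real s))
     has_integral of_real (2 * pi * besselI \<nu> \<kappa>)) {-pi..pi}"
proof -
  have "(\<lambda>j. 2 * pi * (\<kappa> ^ j / fact j * (cos_power_coeff \<nu> j / 2 ^ j))) sums (2 * pi * besselI \<nu> \<kappa>)"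
    by (intro sums_mult cos_power_coeff_series_sums_besselI)
  then have "(\<lambda>j. of_real (\<kappa> ^ j / fact j * (2 * pi * cos_power_coeff \<nu> j / 2 ^ j)) :: complex)
               sums of_real (2 * pi * besselI \<nu> \<kappa>)"
    by (intro sums_of_real) (simp add: field_simps)
  then have "integral {-pi..pi} (\<lambda>s. exp (of_real (\<kappa> * cos s)) * exp (- \<i> * of_int \<nu> * of_real s))
      = of_real (2 * pi * besselI \<nu> \<kappa>)"
    using exp_cos_fourier_integral_sums sums_unique2 by blast
  moreover have "(\<lambda>s. exp (of_real (\<kappa> * cos s)) * exp (- \<i> * of_int \<nu> * of_real s)) integrable_on {-pi..pi}"
    by (intro integrable_continuous_interval continuous_intros)
  ultimately show ?thesis
    by (metis has_integral_integral)
qed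

section \<open>Taylor expansion of \<open>exp (R g) h\<close> at the origin\<close>

lemma holomorphic_bounded_on_compact:
  assumes "f holomorphic_on S" "compact K" "K \<subseteq> S"
  shows "\<exists>B\<ge>0. \<forall>z\<in>K. norm (f z) \<le> B"
proof -
  have "continuous_on K f"
    using assms by (meson holomorphic_on_imp_continuous_on holomorphic_on_subset)
  then have "bounded (f ` K)"
    using assms(2) by (intro compact_imp_bounded compact_continuous_image)
  then obtain B where "B > 0" "\<forall>x\<in>f ` K. norm x \<le> B"
    unfolding bounded_pos by blast
  then show ?thesis by (intro exI[of _ B]) auto
qed

lemma holomorphic_taylor_remainder_bound:
  assumes hol: "f holomorphic_on ball 0 r" and "\<rho> < r"
  shows "\<exists>B\<ge>0. \<forall>z\<in>cball 0 \<rho>.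
           norm (f z - (\<Sum>i\<le>n. (deriv ^^ i) f 0 * z ^ i / fact i)) \<le> B * norm z ^ Suc n"
proof -
  have sub: "cball 0 \<rho> \<subseteq> ball 0 r"
    using \<open>\<rho> < r\<close> by auto
  obtain B where B: "B \<ge> 0" "\<And>z. z \<in> cball 0 \<rho> \<Longrightarrow> norm ((deriv ^^ Suc n) f z) \<le> B"
    using holomorphic_bounded_on_compact[OF holomorphic_higher_deriv[OF hol open_ball] compact_cball sub]
    by blast
  have "norm (f z - (\<Sum>i\<le>n. (deriv ^^ i) f 0 * z ^ i / fact i)) \<le> B * norm z ^ Suc n"
    if z: "z \<in> cball 0 \<rho>" for z
  proof -
    have "norm ((deriv ^^ 0) f z - (\<Sum>i\<le>n. (deriv ^^ i) f 0 * (z - 0) ^ i / fact i))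
            \<le> B * norm (z - 0) ^ Suc n / fact n"
    proof (rule complex_Taylor[of "cball 0 \<rho>" n "\<lambda>i. (deriv ^^ i) f" B 0 z])
      fix i x assume "x \<in> cball (0::complex) \<rho>"
      then show "((deriv ^^ i) f has_field_derivative (deriv ^^ Suc i) f x) (at x within cball 0 \<rho>)"
        using \<open>\<rho> < r\<close> by (intro has_field_derivative_at_within[OF has_field_derivative_higher_deriv[OF hol]]) auto
    qed (use z B order_trans[OF norm_ge_zero, of z \<rho>] in auto)
    also have "\<dots> \<le> B * norm z ^ Suc n"
      using B(1) divide_left_mono[of 1 "fact n" "B * norm z ^ Suc n"] by simp
    finally show ?thesis by simp
  qed
  then show ?thesis using B(1) by blast
qed

lemma holomorphic_linear_bound_at_0:
  assumes "g holomorphic_on ball 0 r" "\<rho> < r" "g 0 = 0"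
  shows "\<exists>K\<ge>0. \<forall>z\<in>cball 0 \<rho>. norm (g z) \<le> K * norm z"
  using holomorphic_taylor_remainder_bound[OF assms(1,2), of 0] assms(3) by simp

lemma higher_deriv_norm_le_of_power_bound:
  assumes hol: "f holomorphic_on ball 0 r"
    and bound: "\<And>z. norm z < r \<Longrightarrow> norm (f z) \<le> B * norm z ^ m"
    and "0 < t" "t < r" "0 < k" "k \<le> m"
  shows "norm ((deriv ^^ k) f 0) \<le> fact k * (\<bar>B\<bar> + 1) * t ^ (m - k)"
proof -
  have "norm ((deriv ^^ k) f 0) \<le> fact k * ((\<bar>B\<bar> + 1) * t ^ m) / t ^ k"
  proof (rule Cauchy_higher_deriv_bound[where y=0])
    show "f holomorphic_on ball 0 t"
      using hol by (rule holomorphic_on_subset) (use \<open>t < r\<close> in auto)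
    show "continuous_on (cball 0 t) f"
      using holomorphic_on_imp_continuous_on[OF hol] by (rule continuous_on_subset) (use \<open>t < r\<close> in auto)
    fix w :: complex assume "w \<in> ball 0 t"
    then have w: "norm w < t" by simp
    have "norm (f w) \<le> B * norm w ^ m" using bound w \<open>t < r\<close> by simp
    also have "\<dots> \<le> \<bar>B\<bar> * t ^ m" using w by (intro mult_mono power_mono) auto
    also have "\<dots> < (\<bar>B\<bar> + 1) * t ^ m" using \<open>0 < t\<close> by (simp add: distrib_right)
    finally show "f w \<in> ball 0 ((\<bar>B\<bar> + 1) * t ^ m)" by simp
  qed (use assms in auto)
  also have "\<dots> = fact k * (\<bar>B\<bar> + 1) * t ^ (m - k)"
    using assms by (simp add: power_diff)
  finally show ?thesis .
qed

lemma higher_deriv_eq_0_of_bound: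
  assumes hol: "f holomorphic_on ball 0 r" and "0 < r"
    and bound: "\<And>z. norm z < r \<Longrightarrow> norm (f z) \<le> B * norm z ^ m" and "k < m"
  shows "(deriv ^^ k) f 0 = 0"
proof (cases "k = 0")
  case True
  then show ?thesis
    using bound[of 0] \<open>0 < r\<close> \<open>k < m\<close> by (simp add: power_0_left)
next
  case False
  define d where "d = norm ((deriv ^^ k) f 0)"
  define A where "A = fact k * (\<bar>B\<bar> + 1)"
  have "A > 0" unfolding A_def by (simp add: add_pos_nonneg)
  have small: "d \<le> A * t" if "0 < t" "t < min r 1" for t
  proof -
    have "d \<le> A * t ^ (m - k)"
      unfolding d_def A_def using that False \<open>k < m\<close>
      by (intro higher_deriv_norm_le_of_power_bound[OF hol bound]) auto
    also have "\<dots> \<le> A * t"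
      using that \<open>k < m\<close> \<open>A > 0\<close> power_decreasing[of 1 "m - k" t] by simp
    finally show ?thesis .
  qed
  show ?thesis
  proof (rule ccontr)
    assume "(deriv ^^ k) f 0 \<noteq> 0"
    then have "d > 0" unfolding d_def by simp
    define t where "t = min (min r 1 / 2) (d / (2 * A))"
    have "0 < t" "t < min r 1"
      unfolding t_def using \<open>0 < r\<close> \<open>d > 0\<close> \<open>A > 0\<close> by auto
    moreover have "A * t \<le> d / 2"
      using \<open>A > 0\<close> unfolding t_def by (simp add: min_def field_simps)
    ultimately show False using small[of t] \<open>d > 0\<close> by linarith
  qed
qed

lemma higher_deriv_sum:
  assumes "finite I" "\<And>i. i \<in> I \<Longrightarrow> f i holomorphic_on S" "open S" "z \<in> S"
  shows "(deriv ^^ k) (\<lambda>w. \<Sum>i\<in>I. f i w) z = (\<Sum>i\<in>I. (deriv ^^ k) (f i) z)"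
  using assms(1,2)
proof (induction I rule: finite_induct)
  case (insert a I)
  have "(deriv ^^ k) (\<lambda>w. f a w + (\<Sum>i\<in>I. f i w)) z
          = (deriv ^^ k) (f a) z + (deriv ^^ k) (\<lambda>w. \<Sum>i\<in>I. f i w) z"
    using insert.prems assms(3,4) by (intro higher_deriv_add holomorphic_on_sum) auto
  then show ?case
    using insert by simp
qed simp

lemma higher_deriv_power_at_0:
  "(deriv ^^ k) (\<lambda>w::complex. w ^ j) 0 = (if j = k then fact k else 0)"
  using higher_deriv_power[of k "0::complex" j 0]
  by (cases j k rule: linorder_cases) (auto simp: pochhammer_fact pochhammer_0_left)

lemma higher_deriv_poly_at_0:
  "(deriv ^^ k) (\<lambda>R::complex. \<Sum>j\<le>K. c j * R ^ j) 0 = (if k \<le> K then fact k * c k else 0)"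
proof -
  have "(deriv ^^ k) (\<lambda>R::complex. \<Sum>j\<le>K. c j * R ^ j) 0 = (\<Sum>j\<le>K. (deriv ^^ k) (\<lambda>R. c j * R ^ j) 0)"
    by (rule higher_deriv_sum[where S=UNIV]) (auto intro!: holomorphic_intros)
  also have "\<dots> = (\<Sum>j\<le>K. c j * (if j = k then fact k else 0))"
    by (rule sum.cong[OF refl], subst higher_deriv_cmult[where A=UNIV])
       (auto intro!: holomorphic_intros simp: higher_deriv_power_at_0)
  also have "\<dots> = (if k \<le> K then fact k * c k else 0)"
    by (simp add: if_distrib mult.commute cong: if_cong)
  finally show ?thesis .
qed

lemma exp_taylor_tail_le:
  fixes w :: complex
  assumes "norm w \<le> c * x" "0 \<le> c" "0 \<le> x" "x \<le> \<rho>"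
  shows "norm (exp w - (\<Sum>j\<le>N. w ^ j / fact j)) \<le> exp (c * \<rho>) * c ^ Suc N * x ^ Suc N"
proof -
  have "norm (exp w - (\<Sum>j\<le>N. w ^ j / fact j)) \<le> exp (norm w) * norm w ^ Suc N / fact N"
    by (rule Taylor_exp_field)
  also have "\<dots> \<le> exp (norm w) * norm w ^ Suc N"
    using divide_left_mono[of 1 "fact N" "exp (norm w) * norm w ^ Suc N"] by simp
  also have "\<dots> \<le> exp (c * \<rho>) * (c * x) ^ Suc N"
    using assms order_trans[OF assms(1) mult_left_mono[OF assms(4,2)]]
    by (intro mult_mono power_mono) auto
  finally show ?thesis
    by (simp add: power_mult_distrib mult_ac)
qed

lemma higher_deriv_mult_power_eq_0:
  assumes h: "h holomorphic_on ball 0 r" and g: "g holomorphic_on ball 0 r"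
    and "0 < r" "g 0 = 0" "m < j"
  shows "(deriv ^^ m) (\<lambda>z. h z * g z ^ j) 0 = 0"
proof -
  obtain K where K: "K \<ge> 0" "\<And>z. z \<in> cball 0 (r/2) \<Longrightarrow> norm (g z) \<le> K * norm z"
    using holomorphic_linear_bound_at_0[OF g, of "r/2"] \<open>0 < r\<close> \<open>g 0 = 0\<close> by auto
  have "cball 0 (r/2) \<subseteq> ball 0 r"
    using \<open>0 < r\<close> by auto
  then obtain B where B: "B \<ge> 0" "\<And>z. z \<in> cball 0 (r/2) \<Longrightarrow> norm (h z) \<le> B"
    using holomorphic_bounded_on_compact[OF h compact_cball] by blast
  show ?thesis
  proof (rule higher_deriv_eq_0_of_bound)
    show "(\<lambda>z. h z * g z ^ j) holomorphic_on ball 0 (r/2)"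
      using h g \<open>0 < r\<close> by (intro holomorphic_intros) (auto elim!: holomorphic_on_subset)
    fix z :: complex assume "norm z < r/2"
    then have "norm (h z * g z ^ j) \<le> B * (K * norm z) ^ j"
      unfolding norm_mult norm_power using B K by (intro mult_mono power_mono) auto
    then show "norm (h z * g z ^ j) \<le> (B * K ^ j) * norm z ^ j"
      by (simp add: power_mult_distrib mult.assoc)
  qed (use assms in auto)
qed

lemma higher_deriv_mult_exp_remainder_eq_0:
  assumes h: "h holomorphic_on ball 0 r" and g: "g holomorphic_on ball 0 r"
    and "0 < r" "g 0 = 0"
  shows "(deriv ^^ m) (\<lambda>z. h z * (exp (R * g z) - (\<Sum>j\<le>m. (R * g z) ^ j / fact j))) 0 = 0"
proof -
  have sub: "cball 0 (r/2) \<subseteq> ball 0 r"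
    using \<open>0 < r\<close> by auto
  obtain K where K: "K \<ge> 0" "\<And>z. z \<in> cball 0 (r/2) \<Longrightarrow> norm (g z) \<le> K * norm z"
    using holomorphic_linear_bound_at_0[OF g, of "r/2"] \<open>0 < r\<close> \<open>g 0 = 0\<close> by auto
  obtain B where B: "B \<ge> 0" "\<And>z. z \<in> cball 0 (r/2) \<Longrightarrow> norm (h z) \<le> B"
    using holomorphic_bounded_on_compact[OF h compact_cball sub] by blast
  show ?thesis
  proof (rule higher_deriv_eq_0_of_bound)
    show "(\<lambda>z. h z * (exp (R * g z) - (\<Sum>j\<le>m. (R * g z) ^ j / fact j))) holomorphic_on ball 0 (r/2)"
      using h g sub by (intro holomorphic_intros) (auto elim!: holomorphic_on_subset)
    fix z :: complex assume z: "norm z < r/2"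
    have "norm (R * g z) \<le> (norm R * K) * norm z"
      using K z by (simp add: norm_mult mult.assoc mult_left_mono)
    then have "norm (exp (R * g z) - (\<Sum>j\<le>m. (R * g z) ^ j / fact j))
                 \<le> exp (norm R * K * (r/2)) * (norm R * K) ^ Suc m * norm z ^ Suc m"
      using K z by (intro exp_taylor_tail_le) auto
    then show "norm (h z * (exp (R * g z) - (\<Sum>j\<le>m. (R * g z) ^ j / fact j)))
                 \<le> (B * exp (norm R * K * (r/2)) * (norm R * K) ^ Suc m) * norm z ^ Suc m"
      unfolding norm_mult using B z by (simp add: mult.assoc mult_mono)
  qed (use \<open>0 < r\<close> in auto)
qed

lemma higher_deriv_exp_mult_at_0:
  assumes h: "h holomorphic_on ball 0 r" and g: "g holomorphic_on ball 0 r"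
    and "0 < r" "g 0 = 0"
  shows "(deriv ^^ m) (\<lambda>z. exp (R * g z) * h z) 0
           = (\<Sum>j\<le>m. (deriv ^^ m) (\<lambda>z. h z * g z ^ j) 0 / fact j * R ^ j)"
proof -
  define f where "f = (\<lambda>j z. h z * g z ^ j)"
  define E where "E = (\<lambda>z. h z * (exp (R * g z) - (\<Sum>j\<le>m. (R * g z) ^ j / fact j)))"
  have f_hol: "(\<lambda>z. R ^ j / fact j * f j z) holomorphic_on ball 0 r" for j
    unfolding f_def using h g by (intro holomorphic_intros)
  have E_hol: "E holomorphic_on ball 0 r"
    unfolding E_def using h g by (intro holomorphic_intros) auto
  have split: "exp (R * g z) * h z = (\<Sum>j\<le>m. R ^ j / fact j * f j z) + E z" for z
    by (simp add: E_def f_def algebra_simps sum_distrib_left power_mult_distrib)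
  have "(deriv ^^ m) E 0 = 0"
    unfolding E_def by (rule higher_deriv_mult_exp_remainder_eq_0[OF assms])
  moreover have "(deriv ^^ m) (\<lambda>z. (\<Sum>j\<le>m. R ^ j / fact j * f j z) + E z) 0
      = (deriv ^^ m) (\<lambda>z. \<Sum>j\<le>m. R ^ j / fact j * f j z) 0 + (deriv ^^ m) E 0"
    by (rule higher_deriv_add[OF holomorphic_on_sum[OF f_hol] E_hol open_ball]) (use \<open>0 < r\<close> in simp)
  moreover have "(deriv ^^ m) (\<lambda>z. \<Sum>j\<le>m. R ^ j / fact j * f j z) 0
      = (\<Sum>j\<le>m. (deriv ^^ m) (\<lambda>z. R ^ j / fact j * f j z) 0)"
    by (rule higher_deriv_sum[OF finite_atMost f_hol open_ball]) (use \<open>0 < r\<close> in simp)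
  ultimately have "(deriv ^^ m) (\<lambda>z. exp (R * g z) * h z) 0
      = (\<Sum>j\<le>m. (deriv ^^ m) (\<lambda>z. R ^ j / fact j * f j z) 0)"
    unfolding split by simp
  also have "\<dots> = (\<Sum>j\<le>m. (deriv ^^ m) (f j) 0 / fact j * R ^ j)"
    using h g \<open>0 < r\<close> unfolding f_def
    by (intro sum.cong refl, subst higher_deriv_cmult[where A="ball 0 r"]) (auto intro!: holomorphic_intros)
  finally show ?thesis
    unfolding f_def .
qed

lemma higher_deriv_exp_mult_mixed:
  assumes h: "h holomorphic_on ball 0 r" and g: "g holomorphic_on ball 0 r"
    and "0 < r" "g 0 = 0"
    and F: "\<And>R z. z \<in> ball 0 r \<Longrightarrow> F R z = exp (R * g z) * h z"
  shows "(deriv ^^ a1) (\<lambda>R. (deriv ^^ a2) (F R) 0) 0 = (deriv ^^ a2) (\<lambda>z. h z * g z ^ a1) 0"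
proof -
  \<comment> \<open>The \<open>\<xi>\<close>-derivative is a polynomial in \<open>R\<close> of degree \<open>a2\<close>; its coefficient of \<open>R^a1\<close> vanishes for
    \<open>a1 > a2\<close> because \<open>g\<close> vanishes at the origin.\<close>
  define D where "D = (\<lambda>j. (deriv ^^ a2) (\<lambda>z. h z * g z ^ j) 0)"
  have "(deriv ^^ a2) (F R) 0 = (\<Sum>j\<le>a2. D j / fact j * R ^ j)" for R
  proof -
    have "\<forall>\<^sub>F z in nhds 0. F R z = exp (R * g z) * h z"
      using eventually_nhds_in_open[of "ball 0 r" 0] \<open>0 < r\<close> by (auto elim!: eventually_mono simp: F)
    then have "(deriv ^^ a2) (F R) 0 = (deriv ^^ a2) (\<lambda>z. exp (R * g z) * h z) 0"
      by (rule higher_deriv_cong_ev) simp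
    then show ?thesis
      unfolding D_def using higher_deriv_exp_mult_at_0[OF h g assms(3,4)] by simp
  qed
  then have "(deriv ^^ a1) (\<lambda>R. (deriv ^^ a2) (F R) 0) 0 = (if a1 \<le> a2 then D a1 else 0)"
    using higher_deriv_poly_at_0[where c="\<lambda>j. D j / fact j" and k=a1 and K=a2] by simp
  also have "\<dots> = D a1"
    unfolding D_def using higher_deriv_mult_power_eq_0[OF h g assms(3,4), of a2 a1] by auto
  finally show ?thesis
    unfolding D_def .
qed

lemma exp_mult_double_taylor_estimate:
  fixes R \<xi> :: complex
  assumes \<xi>: "norm \<xi> \<le> \<rho>" and R: "norm R \<le> C * norm \<xi>" and "0 \<le> C"
    and K: "norm (g \<xi>) \<le> K" "0 \<le> K" and H: "norm (h \<xi>) \<le> H"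
    and taylor: "\<And>j. j \<le> N \<Longrightarrow>
      norm (h \<xi> * g \<xi> ^ j - (\<Sum>i\<le>N - j. c j i * \<xi> ^ i / fact i)) \<le> B j * norm \<xi> ^ Suc (N - j)"
  shows "norm (exp (R * g \<xi>) * h \<xi> - (\<Sum>a1\<le>N. \<Sum>a2\<le>N - a1. c a1 a2 * (R ^ a1 / fact a1) * (\<xi> ^ a2 / fact a2)))
           \<le> ((\<Sum>j\<le>N. C ^ j * B j) + H * exp (C * K * \<rho>) * (C * K) ^ Suc N) * norm \<xi> ^ Suc N"
proof -
  define Y where "Y = (\<lambda>j. h \<xi> * g \<xi> ^ j - (\<Sum>i\<le>N - j. c j i * \<xi> ^ i / fact i))"
  define X where "X = exp (R * g \<xi>) - (\<Sum>j\<le>N. (R * g \<xi>) ^ j / fact j)"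
  \<comment> \<open>Expand exp in R first; the coefficient of R^j is then expanded in \<xi> to order N - j.\<close>
  have split: "exp (R * g \<xi>) * h \<xi> - (\<Sum>a1\<le>N. \<Sum>a2\<le>N - a1. c a1 a2 * (R ^ a1 / fact a1) * (\<xi> ^ a2 / fact a2))
      = (\<Sum>j\<le>N. R ^ j / fact j * Y j) + h \<xi> * X"
    by (simp add: X_def Y_def algebra_simps sum_distrib_left sum_subtractf power_mult_distrib)
  have "norm (R ^ j / fact j * Y j) \<le> C ^ j * B j * norm \<xi> ^ Suc N" if "j \<le> N" for j
  proof -
    have "norm (R ^ j / fact j * Y j) \<le> norm R ^ j * norm (Y j)"
      using divide_left_mono[of 1 "fact j" "norm R ^ j * norm (Y j)"]
      by (simp add: norm_mult norm_divide norm_power)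
    also have "\<dots> \<le> (C * norm \<xi>) ^ j * (B j * norm \<xi> ^ Suc (N - j))"
      using taylor[OF that] R \<open>0 \<le> C\<close> unfolding Y_def by (intro mult_mono power_mono) auto
    also have "\<dots> = C ^ j * B j * norm \<xi> ^ Suc N"
      using that by (simp add: power_mult_distrib mult_ac power_add[symmetric] Suc_diff_le)
    finally show ?thesis .
  qed
  moreover have "norm (h \<xi> * X) \<le> H * exp (C * K * \<rho>) * (C * K) ^ Suc N * norm \<xi> ^ Suc N"
  proof -
    have "norm R * norm (g \<xi>) \<le> (C * norm \<xi>) * K"
      using R K \<open>0 \<le> C\<close> by (intro mult_mono) auto
    then have "norm (R * g \<xi>) \<le> (C * K) * norm \<xi>"
      by (simp add: norm_mult mult_ac)
    then have "norm X \<le> exp (C * K * \<rho>) * (C * K) ^ Suc N * norm \<xi> ^ Suc N"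
      unfolding X_def using \<xi> K \<open>0 \<le> C\<close> by (intro exp_taylor_tail_le) auto
    then have "norm (h \<xi>) * norm X \<le> H * (exp (C * K * \<rho>) * (C * K) ^ Suc N * norm \<xi> ^ Suc N)"
      using H order_trans[OF norm_ge_zero H] by (intro mult_mono) auto
    then show ?thesis
      by (simp add: norm_mult mult.assoc)
  qed
  ultimately show ?thesis
    unfolding split distrib_right sum_distrib_right
    by (intro order_trans[OF norm_triangle_ineq] add_mono order_trans[OF norm_sum] sum_mono) auto
qed

lemma exp_mult_double_taylor_bound:
  assumes h: "h holomorphic_on ball 0 r" and g: "g holomorphic_on ball 0 r"
    and "\<rho> < r" "0 \<le> C"
  shows "\<exists>M\<ge>0. \<forall>R \<xi>. norm \<xi> \<le> \<rho> \<longrightarrow> norm R \<le> C * norm \<xi> \<longrightarrow>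
           norm (exp (R * g \<xi>) * h \<xi>
                 - (\<Sum>a1\<le>N. \<Sum>a2\<le>N - a1. (deriv ^^ a2) (\<lambda>z. h z * g z ^ a1) 0
                                           * (R ^ a1 / fact a1) * (\<xi> ^ a2 / fact a2)))
           \<le> M * norm \<xi> ^ Suc N"
proof -
  have "\<forall>j. \<exists>B\<ge>0. \<forall>z\<in>cball 0 \<rho>.
          norm (h z * g z ^ j - (\<Sum>i\<le>N - j. (deriv ^^ i) (\<lambda>z. h z * g z ^ j) 0 * z ^ i / fact i))
            \<le> B * norm z ^ Suc (N - j)" (is "\<forall>j. \<exists>B\<ge>0. ?taylor j B")
    using holomorphic_taylor_remainder_bound[OF _ \<open>\<rho> < r\<close>] h g
    by (simp add: holomorphic_on_mult holomorphic_on_power)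
  then have "\<exists>B. \<forall>j. B j \<ge> 0 \<and> ?taylor j (B j)"
    by (rule choice)
  then obtain B where B: "\<forall>j. B j \<ge> 0 \<and> ?taylor j (B j)" ..
  have "cball 0 \<rho> \<subseteq> ball 0 r"
    using \<open>\<rho> < r\<close> by auto
  then obtain K H where K: "K \<ge> 0" "\<And>z. z \<in> cball 0 \<rho> \<Longrightarrow> norm (g z) \<le> K"
    and H: "H \<ge> 0" "\<And>z. z \<in> cball 0 \<rho> \<Longrightarrow> norm (h z) \<le> H"
    using holomorphic_bounded_on_compact[OF g compact_cball] holomorphic_bounded_on_compact[OF h compact_cball]
    by metis
  define M where "M = (\<Sum>j\<le>N. C ^ j * B j) + H * exp (C * K * \<rho>) * (C * K) ^ Suc N"
  have "M \<ge> 0"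
    unfolding M_def using B H(1) K(1) \<open>0 \<le> C\<close> by (intro add_nonneg_nonneg sum_nonneg) auto
  moreover have "norm (exp (R * g \<xi>) * h \<xi>
                 - (\<Sum>a1\<le>N. \<Sum>a2\<le>N - a1. (deriv ^^ a2) (\<lambda>z. h z * g z ^ a1) 0
                                           * (R ^ a1 / fact a1) * (\<xi> ^ a2 / fact a2)))
           \<le> M * norm \<xi> ^ Suc N" if "norm \<xi> \<le> \<rho>" "norm R \<le> C * norm \<xi>" for R \<xi>
    unfolding M_def using that B K H \<open>0 \<le> C\<close> by (intro exp_mult_double_taylor_estimate) auto
  ultimately show ?thesis
    by blast
qed

section \<open>The functions \<open>r\<close> and \<open>\<phi>\<close> near the origin\<close>

definition sin_pi_div :: "complex \<Rightarrow> complex" where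
  "sin_pi_div z = (if z = 0 then of_real pi else sin (of_real pi * z) / z)"

definition phi_core :: "nat \<Rightarrow> nat \<Rightarrow> nat \<Rightarrow> complex \<Rightarrow> complex" where
  "phi_core n k1 k2 z = (of_real pi / sin_pi_div z) ^ (n + k1) * cos (of_real pi * z) ^ k1 * (1 - z) ^ (n + k1 + k2)"

definition r_numerator :: "complex \<Rightarrow> complex" where
  "r_numerator z = z * sin (of_real pi * z) - sin (of_real pi * z) + of_real pi * (z - z\<^sup>2) * cos (of_real pi * z)"

lemma r_fun_zero [simp]: "r_fun 0 = 0"
  by (simp add: r_fun_def)

lemma sin_pi_div_holomorphic: "sin_pi_div holomorphic_on UNIV"
proof -
  have "(\<lambda>z. if z = 0 then deriv (\<lambda>z. sin (of_real pi * z)) 0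
              else (sin (of_real pi * z) - sin (of_real pi * 0)) / (z - 0)) holomorphic_on UNIV"
    by (rule pole_lemma) (auto intro: holomorphic_intros)
  moreover have "deriv (\<lambda>z::complex. sin (of_real pi * z)) 0 = of_real pi"
    by (rule DERIV_imp_deriv) (auto intro!: derivative_eq_intros)
  ultimately show ?thesis
    by (elim holomorphic_transform) (simp add: sin_pi_div_def)
qed

lemma not_Ints_in_unit_disc:
  fixes z :: complex
  assumes "norm z < 1" "z \<noteq> 0"
  shows "z \<notin> \<int>"
proof
  assume "z \<in> \<int>"
  then obtain m where m: "z = of_int m"
    by (auto elim: Ints_cases)
  then have "\<bar>m\<bar> < 1"
    using assms(1) by simp
  then show False
    using m assms(2) by simp
qed

lemma sin_pi_nonzero_in_unit_disc:
  fixes z :: complex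
  assumes "norm z < 1" "z \<noteq> 0"
  shows "sin (of_real pi * z) \<noteq> 0"
proof
  assume "sin (of_real pi * z) = 0"
  then obtain m :: int where "of_real pi * z = of_real (of_int m * pi)"
    by (auto simp: sin_eq_0)
  then have "z = of_int m"
    by (simp add: mult.commute)
  then show False
    using not_Ints_in_unit_disc[OF assms] by simp
qed

lemma sin_pi_div_nonzero: "norm z < 1 \<Longrightarrow> sin_pi_div z \<noteq> 0"
  unfolding sin_pi_div_def using sin_pi_nonzero_in_unit_disc by auto

lemma phi_core_holomorphic: "phi_core n k1 k2 holomorphic_on ball 0 1"
  unfolding phi_core_def using sin_pi_div_nonzero
  by (auto intro!: holomorphic_intros holomorphic_on_subset[OF sin_pi_div_holomorphic])

lemma r_fun_neg_in_unit_disc: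
  assumes "norm z < 1" "z \<noteq> 0"
  shows "r_fun (- z) = 1 - 1 / z + of_real pi * (1 - z) * cos (of_real pi * z) / sin (of_real pi * z)"
proof -
  have "- z \<notin> \<int>"
    using not_Ints_in_unit_disc[OF assms] by (metis Ints_minus minus_minus)
  then show ?thesis
    using assms by (simp add: r_fun_def cot_def)
qed

lemma r_fun_neg_eq_numerator:
  assumes "norm z < 1" "z \<noteq> 0"
  shows "r_fun (- z) = r_numerator z / (z\<^sup>2 * sin_pi_div z)"
proof -
  have denom: "z\<^sup>2 * sin_pi_div z = z * sin (of_real pi * z)"
    using assms(2) by (simp add: sin_pi_div_def power2_eq_square)
  show ?thesis
    unfolding r_fun_neg_in_unit_disc[OF assms] r_numerator_def denom
    using sin_pi_nonzero_in_unit_disc[OF assms] assms(2)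
    by (simp add: divide_simps power2_eq_square) (simp add: algebra_simps)
qed

lemma sin_cos_pi_cubic_remainder:
  fixes z :: complex
  assumes "norm z \<le> 1"
  shows "norm (sin (of_real pi * z) - of_real pi * z) \<le> exp pi * pi ^ 3 / 2 * norm z ^ 3"
    and "norm (cos (of_real pi * z) - (1 - (of_real pi * z)\<^sup>2 / 2)) \<le> exp pi * pi ^ 3 / 2 * norm z ^ 3"
proof -
  define w where "w = of_real pi * z"
  have "norm w \<le> pi"
    using assms by (simp add: w_def norm_mult mult_left_le_one_le)
  then have "exp \<bar>Im w\<bar> \<le> exp pi"
    using abs_Im_le_cmod[of w] by simp
  then have rem: "exp \<bar>Im w\<bar> * norm w ^ Suc 2 / fact 2 \<le> exp pi * pi ^ 3 / 2 * norm z ^ 3"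
    by (simp add: w_def norm_mult power_mult_distrib mult_right_mono)
  show "norm (sin (of_real pi * z) - of_real pi * z) \<le> exp pi * pi ^ 3 / 2 * norm z ^ 3"
    using Taylor_sin[of w 2] rem by (simp add: w_def sin_coeff_def eval_nat_numeral)
  show "norm (cos (of_real pi * z) - (1 - (of_real pi * z)\<^sup>2 / 2)) \<le> exp pi * pi ^ 3 / 2 * norm z ^ 3"
    using Taylor_cos[of w 2] rem by (simp add: w_def cos_coeff_def eval_nat_numeral)
qed

lemma r_numerator_cubic_bound: "\<exists>K\<ge>0. \<forall>z. norm z \<le> 1 \<longrightarrow> norm (r_numerator z) \<le> K * norm z ^ 3"
proof -
  define c where "c = exp pi * pi ^ 3 / 2"
  have "norm (r_numerator z) \<le> (2 * c + 2 * pi * c + pi ^ 3) * norm z ^ 3" if z: "norm z \<le> 1" for z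
  proof -
    define Es where "Es = sin (of_real pi * z) - of_real pi * z"
    define Ec where "Ec = cos (of_real pi * z) - (1 - (of_real pi * z)\<^sup>2 / 2)"
    \<comment> \<open>The cubic Taylor polynomials cancel exactly, leaving only remainder terms.\<close>
    have "r_numerator z = (z - 1) * Es + of_real pi * (z * (1 - z)) * Ec - of_real pi ^ 3 * (1 - z) * z ^ 3 / 2"
      unfolding r_numerator_def Es_def Ec_def by (simp add: algebra_simps power2_eq_square power3_eq_cube)
    then have "norm (r_numerator z)
        \<le> norm (z - 1) * norm Es + pi * (norm z * norm (1 - z)) * norm Ec + pi ^ 3 * norm (1 - z) * norm z ^ 3 / 2"
      by (auto simp: norm_mult norm_power norm_divide right_diff_distrib[symmetric] power2_eq_square
          intro!: order_trans[OF norm_triangle_ineq4] order_trans[OF norm_triangle_ineq] add_mono)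
    also have "\<dots> \<le> 2 * (c * norm z ^ 3) + pi * (1 * 2) * (c * norm z ^ 3) + pi ^ 3 * 2 * norm z ^ 3 / 2"
    proof -
      have "norm (z - 1) \<le> 2" "norm (1 - z) \<le> 2"
        using norm_triangle_ineq4[of z 1] norm_triangle_ineq4[of 1 z] z by auto
      moreover have "norm Es \<le> c * norm z ^ 3" "norm Ec \<le> c * norm z ^ 3"
        unfolding Es_def Ec_def c_def using sin_cos_pi_cubic_remainder[OF z] by auto
      ultimately show ?thesis
        using z by (intro add_mono mult_mono divide_right_mono mult_left_mono) auto
    qed
    finally show ?thesis
      by (simp add: algebra_simps)
  qed
  moreover have "2 * c + 2 * pi * c + pi ^ 3 \<ge> 0"
    unfolding c_def by simp
  ultimately show ?thesis by blast
qed

lemma sin_pi_div_lower_bound: "\<exists>m>0. \<forall>z\<in>cball 0 (1/2). m \<le> norm (sin_pi_div z)"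
proof -
  have "continuous_on (cball 0 (1/2)) (\<lambda>z. norm (sin_pi_div z))"
    by (intro continuous_intros holomorphic_on_imp_continuous_on holomorphic_on_subset[OF sin_pi_div_holomorphic]) auto
  from continuous_attains_inf[OF compact_cball _ this]
  obtain x where x: "x \<in> cball 0 (1/2)" "\<forall>y\<in>cball 0 (1/2). norm (sin_pi_div x) \<le> norm (sin_pi_div y)"
    by auto
  have "sin_pi_div x \<noteq> 0"
    using x(1) by (intro sin_pi_div_nonzero) auto
  then show ?thesis
    using x(2) by (intro exI[of _ "norm (sin_pi_div x)"]) auto
qed

lemma r_fun_neg_linear_bound: "\<exists>K\<ge>0. \<forall>z. norm z \<le> 1/2 \<longrightarrow> norm (r_fun (- z)) \<le> K * norm z"
proof -
  obtain m where m: "m > 0" "\<And>z. z \<in> cball 0 (1/2) \<Longrightarrow> m \<le> norm (sin_pi_div z)"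
    using sin_pi_div_lower_bound by blast
  obtain K where K: "K \<ge> 0" "\<And>z. norm z \<le> 1 \<Longrightarrow> norm (r_numerator z) \<le> K * norm z ^ 3"
    using r_numerator_cubic_bound by blast
  have "norm (r_fun (- z)) \<le> K / m * norm z" if z: "norm z \<le> 1/2" for z
  proof (cases "z = 0")
    case True
    then show ?thesis by simp
  next
    case False
    have "norm (r_fun (- z)) = norm (r_numerator z) / (norm z ^ 2 * norm (sin_pi_div z))"
      using z False by (simp add: r_fun_neg_eq_numerator norm_mult norm_divide norm_power)
    also have "\<dots> \<le> K * norm z ^ 3 / (norm z ^ 2 * m)"
      using K(2)[of z] K(1) z m False by (intro frac_le mult_left_mono mult_pos_pos) auto
    also have "\<dots> = K / m * norm z"
      using False by (simp add: power2_eq_square power3_eq_cube)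
    finally show ?thesis .
  qed
  then show ?thesis
    using m(1) K(1) by (intro exI[of _ "K / m"]) auto
qed

lemma r_fun_neg_holomorphic: "(\<lambda>z. r_fun (- z)) holomorphic_on ball 0 1"
proof (rule no_isolated_singularity'[where K="{0}"])
  show "(\<lambda>z. r_fun (- z)) holomorphic_on ball 0 1 - {0}"
    by (rule holomorphic_transform[where f="\<lambda>z. 1 - 1 / z + of_real pi * (1 - z) * cos (of_real pi * z) / sin (of_real pi * z)"])
       (use sin_pi_nonzero_in_unit_disc r_fun_neg_in_unit_disc in \<open>auto intro!: holomorphic_intros\<close>)
  obtain K where K: "K \<ge> 0" "\<And>z. norm z \<le> 1/2 \<Longrightarrow> norm (r_fun (- z)) \<le> K * norm z"
    using r_fun_neg_linear_bound by blast
  have "((\<lambda>z. r_fun (- z)) \<longlongrightarrow> 0) (at 0 within ball 0 1)"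
  proof (rule Lim_null_comparison)
    show "\<forall>\<^sub>F z in at 0 within ball 0 1. norm (r_fun (- z)) \<le> K * norm z"
      unfolding eventually_at using K by (intro exI[of _ "1/2"]) (auto simp: dist_norm)
    show "((\<lambda>z::complex. K * norm z) \<longlongrightarrow> 0) (at 0 within ball 0 1)"
      by (auto intro!: tendsto_eq_intros)
  qed
  then show "\<And>z. z \<in> {0} \<Longrightarrow> ((\<lambda>z. r_fun (- z)) \<longlongrightarrow> r_fun (- z)) (at z within ball 0 1)"
    by simp
qed auto

lemma phi_tilde_eq:
  assumes "norm z < 1"
  shows "phi_tilde n k1 k2 R z = exp (R * r_fun (- z)) * phi_core n k1 k2 z"
proof (cases "z = 0")
  case True
  then show ?thesis
    by (simp add: phi_tilde_def phi_core_def sin_pi_div_def)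
next
  case False
  have "phi_tilde n k1 k2 R z = exp (R * r_fun (- z))
          * ((of_real pi * z) ^ (n + k1) / sin (of_real pi * z) ^ (n + k1))
          * cos (of_real pi * z) ^ k1 * (1 - z) ^ (n + k1 + k2)"
    using False not_Ints_in_unit_disc[OF assms False] by (simp add: phi_tilde_def)
  also have "(of_real pi * z) ^ (n + k1) / sin (of_real pi * z) ^ (n + k1) = (of_real pi / sin_pi_div z) ^ (n + k1)"
    using False by (simp add: sin_pi_div_def power_divide field_simps)
  finally show ?thesis
    by (simp add: phi_core_def mult.assoc)
qed

lemma phi_deriv_eq:
  "phi_deriv n k1 k2 a1 a2 = (deriv ^^ a2) (\<lambda>z. phi_core n k1 k2 z * r_fun (- z) ^ a1) 0"
  unfolding phi_deriv_def
  by (rule higher_deriv_exp_mult_mixed[OF phi_core_holomorphic r_fun_neg_holomorphic])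
     (auto simp: phi_tilde_eq)

section \<open>Expansion of \<open>H\<close>\<close>

lemma integral_exp_cos_double_poly:
  "integral {-pi..pi} (\<lambda>s. exp (of_real (\<kappa> * cos s)) * exp (- \<i> * of_nat m * of_real s)
       * (\<Sum>a1\<le>N. \<Sum>a2\<le>N - a1. D a1 a2 * (of_real (\<kappa> * \<delta> / 2) ^ a1 / fact a1)
                                 * ((of_real \<delta> * exp (\<i> * of_real s)) ^ a2 / fact a2)))
   = 2 * of_real pi * (\<Sum>a1\<le>N. \<Sum>a2\<le>N - a1. of_real (besselI (int m - int a2) \<kappa>) * D a1 a2
                        * of_real (\<kappa> ^ a1 / (2 ^ a1 * fact a1 * fact a2)) * of_real (\<delta> ^ (a1 + a2)))"
proof -
  define \<Psi> where "\<Psi> = (\<lambda>a2 s. exp (of_real (\<kappa> * cos s)) * exp (- \<i> * of_int (int m - int a2) * of_real s))"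
  define c where "c = (\<lambda>a1 a2. D a1 a2 * (of_real (\<kappa> * \<delta> / 2) ^ a1 / fact a1) * (of_real \<delta> ^ a2 / fact a2) :: complex)"
  have shift: "exp (- \<i> * of_nat m * of_real s) * exp (\<i> * of_real s) ^ a2
      = exp (- \<i> * of_int (int m - int a2) * of_real s)" for s :: real and a2
  proof -
    have "- \<i> * of_nat m * of_real s + of_nat a2 * (\<i> * of_real s) = - \<i> * of_int (int m - int a2) * (of_real s :: complex)"
      by (simp add: algebra_simps)
    then show ?thesis
      by (simp only: exp_add[symmetric] exp_of_nat_mult[symmetric])
  qed
  have integrand: "exp (of_real (\<kappa> * cos s)) * exp (- \<i> * of_nat m * of_real s)
       * (\<Sum>a1\<le>N. \<Sum>a2\<le>N - a1. D a1 a2 * (of_real (\<kappa> * \<delta> / 2) ^ a1 / fact a1)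
                                 * ((of_real \<delta> * exp (\<i> * of_real s)) ^ a2 / fact a2))
      = (\<Sum>a1\<le>N. \<Sum>a2\<le>N - a1. c a1 a2 * \<Psi> a2 s)" for s
    unfolding sum_distrib_left c_def \<Psi>_def shift[symmetric]
    by (intro sum.cong refl) (simp add: power_mult_distrib mult_ac)
  have "((\<lambda>s. \<Sum>a1\<le>N. \<Sum>a2\<le>N - a1. c a1 a2 * \<Psi> a2 s) has_integral
         (\<Sum>a1\<le>N. \<Sum>a2\<le>N - a1. c a1 a2 * of_real (2 * pi * besselI (int m - int a2) \<kappa>))) {-pi..pi}"
    unfolding \<Psi>_def by (intro has_integral_sum finite_atMost has_integral_mult_right has_integral_exp_cos_besselI)
  moreover have "c a1 a2 * of_real (2 * pi * besselI (int m - int a2) \<kappa>)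
      = 2 * of_real pi * (of_real (besselI (int m - int a2) \<kappa>) * D a1 a2
                        * of_real (\<kappa> ^ a1 / (2 ^ a1 * fact a1 * fact a2)) * of_real (\<delta> ^ (a1 + a2)))" for a1 a2
    by (simp add: c_def power_mult_distrib power_divide power_add field_simps)
  ultimately show ?thesis
    unfolding integrand by (simp add: integral_unique sum_distrib_left)
qed

lemma continuous_on_compose_circle:
  assumes "f holomorphic_on ball 0 1" "0 \<le> \<delta>" "\<delta> < 1"
  shows "continuous_on S (\<lambda>s. f (of_real \<delta> * exp (\<i> * of_real s)))"
  using assms
  by (intro continuous_on_compose2[OF holomorphic_on_imp_continuous_on[OF assms(1)]] continuous_intros)
     (auto simp: norm_mult)

lemma H_int_eq:
  assumes "0 < \<delta>" "\<delta> < 1"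
  shows "H_int n k1 k2 \<kappa> \<delta> = integral {-pi..pi} (\<lambda>s.
     exp (of_real (\<kappa> * cos s)) * exp (- \<i> * of_nat (n + k1 - 1) * of_real s)
     * (exp (of_real (\<kappa> * \<delta> / 2) * r_fun (- (of_real \<delta> * exp (\<i> * of_real s))))
        * phi_core n k1 k2 (of_real \<delta> * exp (\<i> * of_real s))))"
  unfolding H_int_def Let_def
proof (rule integral_cong)
  fix s :: real
  have "norm (of_real \<delta> * exp (\<i> * of_real s)) < 1"
    using assms by (simp add: norm_mult)
  then show "exp (of_real (\<kappa> * cos s) + of_real (\<kappa> * \<delta> / 2) * r_fun (- (of_real \<delta> * exp (\<i> * of_real s))))
        * exp (- \<i> * of_nat (n + k1 - 1) * of_real s) * phi_tilde n k1 k2 0 (of_real \<delta> * exp (\<i> * of_real s))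
      = exp (of_real (\<kappa> * cos s)) * exp (- \<i> * of_nat (n + k1 - 1) * of_real s)
        * (exp (of_real (\<kappa> * \<delta> / 2) * r_fun (- (of_real \<delta> * exp (\<i> * of_real s))))
           * phi_core n k1 k2 (of_real \<delta> * exp (\<i> * of_real s)))"
    by (simp add: phi_tilde_eq exp_add mult_ac)
qed

lemma H_int_taylor_error:
  assumes "0 < \<delta>" "\<delta> < 1/2" "\<kappa> \<in> {0..C}"
    and remainder: "\<forall>R \<xi>. norm \<xi> \<le> 1/2 \<longrightarrow> norm R \<le> C * norm \<xi> \<longrightarrow>
           norm (exp (R * r_fun (- \<xi>)) * phi_core n k1 k2 \<xi>
                 - (\<Sum>a1\<le>N. \<Sum>a2\<le>N - a1. phi_deriv n k1 k2 a1 a2 * (R ^ a1 / fact a1) * (\<xi> ^ a2 / fact a2)))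
           \<le> M0 * norm \<xi> ^ Suc N"
  shows "norm (H_int n k1 k2 \<kappa> \<delta>
                 - 2 * of_real pi * (\<Sum>a1\<le>N. \<Sum>a2\<le>N - a1.
                      of_real (besselI (int (n + k1 - 1) - int a2) \<kappa>)
                      * phi_deriv n k1 k2 a1 a2
                      * of_real (\<kappa> ^ a1 / (2 ^ a1 * fact a1 * fact a2))
                      * of_real (\<delta> ^ (a1 + a2))))
         \<le> 2 * pi * exp C * M0 * \<delta> ^ (N + 1)"
proof -
  define \<xi> where "\<xi> = (\<lambda>s::real. of_real \<delta> * exp (\<i> * of_real s) :: complex)"
  define Rc where "Rc = (of_real (\<kappa> * \<delta> / 2) :: complex)"
  define \<Phi> where "\<Phi> = (\<lambda>s::real. exp (of_real (\<kappa> * cos s)) * exp (- \<i> * of_nat (n + k1 - 1) * of_real s))"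
  define F where "F = (\<lambda>z. exp (Rc * r_fun (- z)) * phi_core n k1 k2 z)"
  define T where "T = (\<lambda>z. \<Sum>a1\<le>N. \<Sum>a2\<le>N - a1. phi_deriv n k1 k2 a1 a2 * (Rc ^ a1 / fact a1) * (z ^ a2 / fact a2))"
  have cont_\<Phi>: "continuous_on {-pi..pi} \<Phi>"
    unfolding \<Phi>_def by (intro continuous_intros)
  have cont_F: "continuous_on {-pi..pi} (\<lambda>s. F (\<xi> s))"
    unfolding \<xi>_def F_def using assms(1,2)
    by (intro continuous_on_compose_circle holomorphic_intros phi_core_holomorphic r_fun_neg_holomorphic) auto
  have cont_T: "continuous_on {-pi..pi} (\<lambda>s. T (\<xi> s))"
    unfolding T_def \<xi>_def by (intro continuous_intros) auto
  have "H_int n k1 k2 \<kappa> \<delta> = integral {-pi..pi} (\<lambda>s. \<Phi> s * F (\<xi> s))"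
    using H_int_eq[of \<delta> n k1 k2 \<kappa>] assms(1,2) by (simp add: \<Phi>_def F_def \<xi>_def Rc_def)
  then have "H_int n k1 k2 \<kappa> \<delta> - integral {-pi..pi} (\<lambda>s. \<Phi> s * T (\<xi> s))
      = integral {-pi..pi} (\<lambda>s. \<Phi> s * F (\<xi> s) - \<Phi> s * T (\<xi> s))"
    using cont_\<Phi> cont_F cont_T
    by (simp add: integral_diff integrable_continuous_interval continuous_on_mult)
  also have "norm \<dots> \<le> exp C * (M0 * \<delta> ^ Suc N) * (pi - - pi)"
  proof (rule integral_bound)
    show "continuous_on {-pi..pi} (\<lambda>s. \<Phi> s * F (\<xi> s) - \<Phi> s * T (\<xi> s))"
      using cont_\<Phi> cont_F cont_T by (intro continuous_intros)
  next
    fix s :: real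
    have "norm (\<Phi> s) = exp (\<kappa> * cos s)"
      unfolding \<Phi>_def by (simp add: norm_mult norm_exp_eq_Re)
    also have "\<dots> \<le> exp C"
      using assms(3) mult_left_le[OF cos_le_one, of \<kappa> s] by simp
    finally have "norm (\<Phi> s) \<le> exp C" .
    moreover have "norm (F (\<xi> s) - T (\<xi> s)) \<le> M0 * \<delta> ^ Suc N"
      using remainder[rule_format, of "\<xi> s" Rc] assms unfolding F_def T_def \<xi>_def Rc_def
      by (simp add: norm_mult mult_right_mono)
    ultimately show "norm (\<Phi> s * F (\<xi> s) - \<Phi> s * T (\<xi> s)) \<le> exp C * (M0 * \<delta> ^ Suc N)"
      unfolding right_diff_distrib[symmetric] norm_mult by (intro mult_mono) auto
  qed (use pi_ge_zero in auto)
  finally show ?thesis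
    unfolding \<Phi>_def T_def \<xi>_def Rc_def integral_exp_cos_double_poly by (simp add: mult_ac)
qed

theorem lemma3p12:
  fixes n k1 k2 :: nat and C :: real
  assumes "n \<ge> 1" and "C > 0"
  shows "\<forall>N::nat. \<exists>M>0. \<exists>d0>0. \<forall>delta kappa.
           0 < delta \<and> delta < 1 \<and> delta < d0 \<and> kappa \<in> {0..C} \<longrightarrow>
           norm (H_int n k1 k2 kappa delta
                 - 2 * of_real pi * (\<Sum>a1\<le>N. \<Sum>a2\<le>N - a1.
                      of_real (besselI (int (n + k1 - 1) - int a2) kappa)
                      * phi_deriv n k1 k2 a1 a2
                      * of_real (kappa ^ a1 / (2 ^ a1 * fact a1 * fact a2))
                      * of_real (delta ^ (a1 + a2))))
           \<le> M * delta ^ (N + 1)"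
proof (intro allI)
  fix N :: nat
  have "\<exists>M0\<ge>0. \<forall>R \<xi>. norm \<xi> \<le> 1/2 \<longrightarrow> norm R \<le> C * norm \<xi> \<longrightarrow>
          norm (exp (R * r_fun (- \<xi>)) * phi_core n k1 k2 \<xi>
                - (\<Sum>a1\<le>N. \<Sum>a2\<le>N - a1. phi_deriv n k1 k2 a1 a2 * (R ^ a1 / fact a1) * (\<xi> ^ a2 / fact a2)))
          \<le> M0 * norm \<xi> ^ Suc N" (is "\<exists>M0\<ge>0. ?remainder M0")
    unfolding phi_deriv_eq using assms(2)
    by (intro exp_mult_double_taylor_bound[where r=1] phi_core_holomorphic r_fun_neg_holomorphic) auto
  then obtain M0 where "M0 \<ge> 0" and remainder: "?remainder M0"
    by blast
  show "\<exists>M>0. \<exists>d0>0. \<forall>delta kappa.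
           0 < delta \<and> delta < 1 \<and> delta < d0 \<and> kappa \<in> {0..C} \<longrightarrow>
           norm (H_int n k1 k2 kappa delta
                 - 2 * of_real pi * (\<Sum>a1\<le>N. \<Sum>a2\<le>N - a1.
                      of_real (besselI (int (n + k1 - 1) - int a2) kappa)
                      * phi_deriv n k1 k2 a1 a2
                      * of_real (kappa ^ a1 / (2 ^ a1 * fact a1 * fact a2))
                      * of_real (delta ^ (a1 + a2))))
           \<le> M * delta ^ (N + 1)"
    by (rule exI[of _ "2 * pi * exp C * M0 + 1"],
        intro conjI exI[of _ "1/2"] allI impI order_trans[OF H_int_taylor_error[OF _ _ _ remainder]])
       (use \<open>M0 \<ge> 0\<close> in \<open>auto intro!: add_nonneg_pos mult_right_mono\<close>)
qed

end
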